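(* For every finite simple graph $H$: (i) $\rho(H)\le\rho_R(H)$. (ii) If $H'$ is obtained from $H$ by removing some edges (keeping all vertices), then $\rho_R(H')\ge\rho_R(H)$. (iii) If $H$ is the union of two vertex-disjoint graphs $H_1$ and $H_2$ together with possibly some additional edges between $V(H_1)$ and $V(H_2)$, and $m(H_1,H_2)$ denotes the number of pairs $(u,v)$ with $u\in V(H_1)$, $v\in V(H_2)$, $uv\notin E(H)$, then $$\rho_R(H_1)+\rho_R(H_2)\le\rho_R(H)\le\rho_R(H_1)+\rho_R(H_2)+m(H_1,H_2).$$
   Context: All graphs are finite and simple. A coloring means a proper vertex coloring; an induced subgraph is rainbow if all its vertices have pairwise different colors. $\rho(H)$ is the least number $m$ such that some graph $G$ on $m$ vertices has the property that every proper vertex coloring of $G$ contains a rainbow induced subgraph isomorphic to $H$. If $V(H)=\{h_1,\ldots,h_n\}$, a replication graph of $H$ is a graph $G$ obtained by replacing each vertex $h_i$ by a clique $K_i$ with $|K_i|\ge1$ (cliques pairwise vertex-disjoint), where two vertices in different cliques $K_i,K_j$ are adjacent iff $h_ih_j\in E(H)$. $\rho_R(H)$ is the minimum order of a replication graph $G$ of $H$ such that every proper vertex coloring of $G$ admits a choice of exactly one vertex from each clique $K_i$ with all chosen vertices of pairwise different colors (such a choice induces a rainbow copy of $H$). *)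

theory Defs
  imports Main
begin

definition simple_graph :: "'a set \<Rightarrow> ('a \<Rightarrow> 'a \<Rightarrow> bool) \<Rightarrow> bool" where
  "simple_graph V E \<longleftrightarrow> finite V \<and>
     (\<forall>u v. E u v \<longrightarrow> u \<in> V \<and> v \<in> V \<and> u \<noteq> v \<and> E v u)"

definition proper_coloring :: "'a set \<Rightarrow> ('a \<Rightarrow> 'a \<Rightarrow> bool) \<Rightarrow> ('a \<Rightarrow> nat) \<Rightarrow> bool" where
  "proper_coloring V E c \<longleftrightarrow> (\<forall>u\<in>V. \<forall>v\<in>V. E u v \<longrightarrow> c u \<noteq> c v)"

definition has_rainbow_induced_copy ::
  "'a set \<Rightarrow> ('a \<Rightarrow> 'a \<Rightarrow> bool) \<Rightarrow> 'b set \<Rightarrow> ('b \<Rightarrow> 'b \<Rightarrow> bool) \<Rightarrow> ('b \<Rightarrow> nat) \<Rightarrow> bool" where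
  "has_rainbow_induced_copy VH EH VG EG c \<longleftrightarrow>
     (\<exists>f. f ` VH \<subseteq> VG \<and> inj_on f VH \<and>
          (\<forall>u\<in>VH. \<forall>v\<in>VH. EG (f u) (f v) \<longleftrightarrow> EH u v) \<and>
          inj_on (c \<circ> f) VH)"

text \<open>rho(H): least m such that some graph on m vertices (w.l.o.g. vertex set {0..<m})
  has a rainbow induced copy of H in every proper coloring.\<close>
definition rho :: "'a set \<Rightarrow> ('a \<Rightarrow> 'a \<Rightarrow> bool) \<Rightarrow> nat" where
  "rho V E = (LEAST m. \<exists>EG :: nat \<Rightarrow> nat \<Rightarrow> bool. simple_graph {..<m} EG \<and>
       (\<forall>c. proper_coloring {..<m} EG c \<longrightarrow> has_rainbow_induced_copy V E {..<m} EG c))"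

text \<open>Replication graph of H with clique sizes k: vertex h replaced by clique
  {(h,i) | i < k h}.\<close>
definition rep_V :: "'a set \<Rightarrow> ('a \<Rightarrow> nat) \<Rightarrow> ('a \<times> nat) set" where
  "rep_V V k = {(h, i). h \<in> V \<and> i < k h}"

definition rep_E :: "('a \<Rightarrow> 'a \<Rightarrow> bool) \<Rightarrow> ('a \<times> nat) \<Rightarrow> ('a \<times> nat) \<Rightarrow> bool" where
  "rep_E E x y \<longleftrightarrow> (fst x = fst y \<and> snd x \<noteq> snd y) \<or> (fst x \<noteq> fst y \<and> E (fst x) (fst y))"

definition rho_R :: "'a set \<Rightarrow> ('a \<Rightarrow> 'a \<Rightarrow> bool) \<Rightarrow> nat" where
  "rho_R V E = (LEAST m. \<exists>k :: 'a \<Rightarrow> nat. (\<forall>h\<in>V. 1 \<le> k h) \<and> (\<Sum>h\<in>V. k h) = m \<and>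
       (\<forall>c. proper_coloring (rep_V V k) (rep_E E) c \<longrightarrow>
          (\<exists>s. (\<forall>h\<in>V. s h < k h) \<and> inj_on (\<lambda>h. c (h, s h)) V)))"

definition restr :: "('a \<Rightarrow> 'a \<Rightarrow> bool) \<Rightarrow> 'a set \<Rightarrow> 'a \<Rightarrow> 'a \<Rightarrow> bool" where
  "restr E A u v \<longleftrightarrow> E u v \<and> u \<in> A \<and> v \<in> A"

end

theory Submission
  imports Defs
begin

text \<open>
  A clique-size function k witnessing rho_R yields, in every proper colouring of the
  replication graph, a rainbow transversal, and the transversal induces a copy of H; this
  gives (i). Deleting edges of H only deletes edges of the replication graph, so proper
  colourings of the denser replication graph remain proper for the sparser one; this gives (ii).
  For the lower bound in (iii), a witness for H restricts to witnesses for H1 and H2: colour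
  the clique vertices outside H1 by fresh pairwise distinct colours. For the upper bound, keep
  a witness k2 for H2 and enlarge each clique of u in H1 by the number of non-neighbours of u
  in H2. In a proper colouring, first take a rainbow transversal of the H2 part; in the
  clique of u at most one vertex repeats the colour chosen for each non-neighbour (neighbours
  cannot share it at all), so at least k1(u) clique vertices stay free, and a rainbow
  transversal of the H1 replication graph on these free vertices completes the choice.
\<close>

definition rainbow_transversal :: "'a set \<Rightarrow> ('a \<Rightarrow> nat) \<Rightarrow> ('a \<times> nat \<Rightarrow> nat) \<Rightarrow> ('a \<Rightarrow> nat) \<Rightarrow> bool" where
  "rainbow_transversal V k c s \<longleftrightarrow> (\<forall>h\<in>V. s h < k h) \<and> inj_on (\<lambda>h. c (h, s h)) V"

definition forces_rainbow_transversal :: "'a set \<Rightarrow> ('a \<Rightarrow> 'a \<Rightarrow> bool) \<Rightarrow> ('a \<Rightarrow> nat) \<Rightarrow> bool" where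
  "forces_rainbow_transversal V E k \<longleftrightarrow> (\<forall>h\<in>V. 1 \<le> k h) \<and>
     (\<forall>c. proper_coloring (rep_V V k) (rep_E E) c \<longrightarrow> (\<exists>s. rainbow_transversal V k c s))"

lemma forces_rainbow_transversalD:
  "forces_rainbow_transversal V E k \<Longrightarrow> proper_coloring (rep_V V k) (rep_E E) c \<Longrightarrow>
     \<exists>s. rainbow_transversal V k c s"
  unfolding forces_rainbow_transversal_def by blast

lemma rho_R_eq_Least: "rho_R V E = (LEAST m. \<exists>k. forces_rainbow_transversal V E k \<and> sum k V = m)"
  unfolding rho_R_def forces_rainbow_transversal_def rainbow_transversal_def
  by (intro arg_cong[where f = Least] ext) blast

lemma rho_R_le_sum: "forces_rainbow_transversal V E k \<Longrightarrow> rho_R V E \<le> sum k V"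
  unfolding rho_R_eq_Least by (rule Least_le) blast

lemma mem_rep_V: "x \<in> rep_V V k \<longleftrightarrow> fst x \<in> V \<and> snd x < k (fst x)"
  unfolding rep_V_def by (cases x) simp

lemma rep_V_eq_Sigma: "rep_V V k = Sigma V (\<lambda>h. {..<k h})"
  unfolding rep_V_def by auto

lemma card_rep_V: "finite V \<Longrightarrow> card (rep_V V k) = sum k V"
  unfolding rep_V_eq_Sigma by simp

lemma rep_E_irrefl: "\<not> rep_E E x x"
  unfolding rep_E_def by auto

lemma rep_E_mono: "(\<And>u v. E' u v \<Longrightarrow> E u v) \<Longrightarrow> rep_E E' x y \<Longrightarrow> rep_E E x y"
  unfolding rep_E_def by blast

lemma proper_coloring_rep_clique_inj:
  assumes "proper_coloring (rep_V V k) (rep_E E) c" "h \<in> V"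
  shows "inj_on (\<lambda>i. c (h, i)) {..<k h}"
  using assms unfolding proper_coloring_def inj_on_def rep_V_def rep_E_def by fastforce

lemma distinct_representatives_greedy:
  assumes "finite V" "\<And>h. h \<in> V \<Longrightarrow> card V \<le> card (C h)"
  shows "\<exists>r. (\<forall>h\<in>V. r h \<in> C h) \<and> inj_on r V"
  using assms
proof (induction V rule: finite_induct)
  case empty
  show ?case by simp
next
  case (insert a F)
  have card_insert: "card (insert a F) = Suc (card F)" using insert.hyps by simp
  then obtain r where r: "\<forall>h\<in>F. r h \<in> C h" "inj_on r F"
    using insert.IH insert.prems by fastforce
  have "card (r ` F) < card (C a)"
    using card_image_le[OF insert.hyps(1), of r] insert.prems[of a] card_insert by simp
  then have "\<not> C a \<subseteq> r ` F"
    using card_mono[OF finite_imageI[OF insert.hyps(1)]] by (meson not_le)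
  then obtain x where x: "x \<in> C a" "x \<notin> r ` F" by blast
  have "\<forall>h\<in>insert a F. (r(a := x)) h \<in> C h" using r x insert.hyps(2) by auto
  moreover have "inj_on (r(a := x)) (insert a F)"
    using r x insert.hyps(2) by (auto simp: inj_on_def)
  ultimately show ?case by blast
qed

lemma forces_rainbow_transversal_card:
  assumes "finite V"
  shows "forces_rainbow_transversal V E (\<lambda>_. card V)"
  unfolding forces_rainbow_transversal_def
proof (intro conjI allI impI)
  show "\<forall>h\<in>V. 1 \<le> card V" using assms by (auto simp: Suc_le_eq card_gt_0_iff)
  fix c assume proper: "proper_coloring (rep_V V (\<lambda>_. card V)) (rep_E E) c"
  define C where "C h = (\<lambda>i. c (h, i)) ` {..<card V}" for h
  have "card (C h) = card V" if "h \<in> V" for h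
    unfolding C_def using proper_coloring_rep_clique_inj[OF proper that] by (simp add: card_image)
  then obtain r where r: "\<forall>h\<in>V. r h \<in> C h" "inj_on r V"
    using distinct_representatives_greedy[OF assms, of C] by auto
  define s where "s h = (SOME i. i < card V \<and> c (h, i) = r h)" for h
  have "s h < card V \<and> c (h, s h) = r h" if "h \<in> V" for h
    unfolding s_def by (rule someI_ex) (use r(1) that in \<open>fastforce simp: C_def\<close>)
  then have "rainbow_transversal V (\<lambda>_. card V) c s"
    using r(2) unfolding rainbow_transversal_def by (simp add: inj_on_def)
  then show "\<exists>s. rainbow_transversal V (\<lambda>_. card V) c s" by blast
qed

text \<open>Cliques of size card V make the LEAST in rho_R range over a nonempty set.\<close>

lemma rho_R_attained:
  assumes "finite V"
  obtains k where "forces_rainbow_transversal V E k" "sum k V = rho_R V E"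
proof -
  have "\<exists>m k. forces_rainbow_transversal V E k \<and> sum k V = m"
    using forces_rainbow_transversal_card[OF assms] by blast
  then have "\<exists>k. forces_rainbow_transversal V E k \<and> sum k V = rho_R V E"
    unfolding rho_R_eq_Least by (rule LeastI_ex)
  with that show thesis by blast
qed

lemma rho_le_card:
  fixes VG :: "'b set"
  assumes finite: "finite VG" and sym: "\<And>x y. EG x y \<Longrightarrow> EG y x" and irrefl: "\<And>x. \<not> EG x x"
    and rainbow: "\<And>c. proper_coloring VG EG c \<Longrightarrow> has_rainbow_induced_copy V E VG EG c"
  shows "rho V E \<le> card VG"
proof -
  define m where "m = card VG"
  obtain g where g: "bij_betw g {..<m} VG"
    using ex_bij_betw_nat_finite[OF finite] unfolding m_def atLeast0LessThan by blast
  define g' where "g' = inv_into {..<m} g"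
  have g': "bij_betw g' VG {..<m}" unfolding g'_def by (rule bij_betw_inv_into[OF g])
  have g'_less: "g' x < m" if "x \<in> VG" for x using bij_betwE[OF g'] that by blast
  have g_g': "g (g' x) = x" if "x \<in> VG" for x
    unfolding g'_def by (rule bij_betw_inv_into_right[OF g that])
  define EN where "EN a b \<longleftrightarrow> a < m \<and> b < m \<and> EG (g a) (g b)" for a b
  have "simple_graph {..<m} EN"
    unfolding simple_graph_def EN_def using sym irrefl by (metis finite_lessThan lessThan_iff)
  moreover have "has_rainbow_induced_copy V E {..<m} EN c" if proper: "proper_coloring {..<m} EN c" for c
  proof -
    have "proper_coloring VG EG (c \<circ> g')"
      using proper g'_less g_g' unfolding proper_coloring_def EN_def by simp
    then obtain f where f: "f ` V \<subseteq> VG" "inj_on f V" "\<forall>u\<in>V. \<forall>v\<in>V. EG (f u) (f v) \<longleftrightarrow> E u v"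
      "inj_on (c \<circ> g' \<circ> f) V"
      using rainbow unfolding has_rainbow_induced_copy_def by blast
    have "(g' \<circ> f) ` V \<subseteq> {..<m}" using f(1) g'_less by auto
    moreover have "inj_on (g' \<circ> f) V"
      using f(1,2) bij_betw_imp_inj_on[OF g'] by (meson comp_inj_on inj_on_subset)
    moreover have "\<forall>u\<in>V. \<forall>v\<in>V. EN ((g' \<circ> f) u) ((g' \<circ> f) v) \<longleftrightarrow> E u v"
      using f(1,3) g'_less g_g' unfolding EN_def by (simp add: image_subset_iff)
    ultimately show ?thesis
      using f(4) unfolding has_rainbow_induced_copy_def by (metis comp_assoc)
  qed
  ultimately show ?thesis unfolding rho_def m_def by (intro Least_le) blast
qed

lemma has_rainbow_induced_copy_rep:
  assumes graph: "simple_graph V E" and forces: "forces_rainbow_transversal V E k"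
    and proper: "proper_coloring (rep_V V k) (rep_E E) c"
  shows "has_rainbow_induced_copy V E (rep_V V k) (rep_E E) c"
proof -
  obtain s where s: "rainbow_transversal V k c s"
    using forces_rainbow_transversalD[OF forces proper] by blast
  have "(\<lambda>h. (h, s h)) ` V \<subseteq> rep_V V k" using s unfolding rainbow_transversal_def rep_V_def by auto
  moreover have "\<forall>u\<in>V. \<forall>v\<in>V. rep_E E (u, s u) (v, s v) \<longleftrightarrow> E u v"
    using graph unfolding rep_E_def simple_graph_def by auto
  moreover have "inj_on (\<lambda>h. (h, s h)) V" by (simp add: inj_on_def)
  ultimately show ?thesis
    using s unfolding has_rainbow_induced_copy_def rainbow_transversal_def by (auto simp: comp_def)
qed

lemma rho_le_rho_R:
  assumes graph: "simple_graph V E"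
  shows "rho V E \<le> rho_R V E"
proof -
  have finite: "finite V" using graph unfolding simple_graph_def by blast
  obtain k where forces: "forces_rainbow_transversal V E k" and sum: "sum k V = rho_R V E"
    using rho_R_attained[OF finite] .
  have "rho V E \<le> card (rep_V V k)"
  proof (rule rho_le_card[where EG = "rep_E E"])
    show "finite (rep_V V k)" using finite unfolding rep_V_eq_Sigma by simp
    show "\<And>x y. rep_E E x y \<Longrightarrow> rep_E E y x"
      using graph unfolding simple_graph_def rep_E_def by auto
  qed (auto simp: rep_E_irrefl has_rainbow_induced_copy_rep[OF graph forces])
  then show ?thesis using card_rep_V[OF finite] sum by simp
qed

lemma proper_coloring_mono:
  assumes "proper_coloring A R c" "B \<subseteq> A" "\<And>x y. x \<in> B \<Longrightarrow> y \<in> B \<Longrightarrow> R' x y \<Longrightarrow> R x y"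
  shows "proper_coloring B R' c"
  using assms unfolding proper_coloring_def by blast

lemma forces_rainbow_transversal_supergraph:
  assumes "forces_rainbow_transversal V E' k" "\<And>u v. E' u v \<Longrightarrow> E u v"
  shows "forces_rainbow_transversal V E k"
proof -
  have "proper_coloring (rep_V V k) (rep_E E') c" if "proper_coloring (rep_V V k) (rep_E E) c" for c
    using proper_coloring_mono[OF that order_refl] rep_E_mono[of E' E] assms(2) by blast
  then show ?thesis using assms(1) unfolding forces_rainbow_transversal_def by blast
qed

lemma rho_R_antimono:
  assumes "finite V" "\<And>u v. E' u v \<Longrightarrow> E u v"
  shows "rho_R V E \<le> rho_R V E'"
proof -
  obtain k where "forces_rainbow_transversal V E' k" "sum k V = rho_R V E'"
    using rho_R_attained[OF assms(1)] .
  then show ?thesis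
    using rho_R_le_sum[OF forces_rainbow_transversal_supergraph] assms(2) by metis
qed

lemma forces_rainbow_transversal_restr:
  assumes finite: "finite V" and "W \<subseteq> V" and forces: "forces_rainbow_transversal V E k"
  shows "forces_rainbow_transversal W (restr E W) k"
  unfolding forces_rainbow_transversal_def
proof (intro conjI allI impI)
  show "\<forall>h\<in>W. 1 \<le> k h" using forces \<open>W \<subseteq> V\<close> unfolding forces_rainbow_transversal_def by blast
  fix c assume proper: "proper_coloring (rep_V W k) (rep_E (restr E W)) c"
  have "finite (rep_V V k)" using finite unfolding rep_V_eq_Sigma by simp
  then obtain f :: "'a \<times> nat \<Rightarrow> nat" where f: "inj_on f (rep_V V k)"
    by (meson finite_imp_inj_to_nat_seg)
  \<comment> \<open>even colours extend c, odd ones are fresh and pairwise distinct outside W\<close>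
  define c' where "c' x = (if fst x \<in> W then 2 * c x else 2 * f x + 1)" for x
  have "proper_coloring (rep_V V k) (rep_E E) c'"
    unfolding proper_coloring_def
  proof (intro ballI impI)
    fix x y assume x: "x \<in> rep_V V k" and y: "y \<in> rep_V V k" and xy: "rep_E E x y"
    have "c x \<noteq> c y" if "fst x \<in> W" "fst y \<in> W"
      using proper x y xy that unfolding proper_coloring_def by (auto simp: mem_rep_V rep_E_def restr_def)
    moreover have "f x \<noteq> f y" using f x y xy rep_E_irrefl unfolding inj_on_def by metis
    ultimately show "c' x \<noteq> c' y" unfolding c'_def by (auto dest: arg_cong[where f = even])
  qed
  then obtain s where "rainbow_transversal V k c' s"
    using forces_rainbow_transversalD[OF forces] by blast
  then have "rainbow_transversal W k c' s"
    using \<open>W \<subseteq> V\<close> unfolding rainbow_transversal_def by (auto intro: inj_on_subset)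
  then have "rainbow_transversal W k c s"
    unfolding rainbow_transversal_def c'_def by (simp add: inj_on_def)
  then show "\<exists>s. rainbow_transversal W k c s" by blast
qed

lemma rho_R_disjoint_union_lower:
  assumes "finite V" "V1 \<inter> V2 = {}" "V1 \<union> V2 = V"
  shows "rho_R V1 (restr E V1) + rho_R V2 (restr E V2) \<le> rho_R V E"
proof -
  obtain k where forces: "forces_rainbow_transversal V E k" and sum: "sum k V = rho_R V E"
    using rho_R_attained[OF assms(1)] .
  have "rho_R V1 (restr E V1) \<le> sum k V1" "rho_R V2 (restr E V2) \<le> sum k V2"
    using forces_rainbow_transversal_restr[OF assms(1) _ forces] assms(3) by (auto intro!: rho_R_le_sum)
  moreover have "sum k V = sum k V1 + sum k V2"
    using assms sum.union_disjoint[of V1 V2 k] by auto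
  ultimately show ?thesis using sum by linarith
qed

lemma card_lessThan_le_avoiding:
  assumes "inj_on f {..<n}" "finite X"
  shows "n \<le> card {i. i < n \<and> f i \<notin> X} + card X"
proof -
  have "card {i. i < n \<and> f i \<in> X} \<le> card X"
    using assms by (intro card_inj_on_le[of f]) (auto intro: inj_on_subset)
  moreover have "{..<n} = {i. i < n \<and> f i \<notin> X} \<union> {i. i < n \<and> f i \<in> X}" by auto
  then have "n \<le> card {i. i < n \<and> f i \<notin> X} + card {i. i < n \<and> f i \<in> X}"
    by (metis card_Un_le card_lessThan)
  ultimately show ?thesis by linarith
qed

lemma proper_coloring_rep_reindex:
  assumes proper: "proper_coloring (rep_V V k) (rep_E E) c" and "W \<subseteq> V"
    and inj: "\<And>u. u \<in> W \<Longrightarrow> inj_on (\<sigma> u) {..<k' u}"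
    and bound: "\<And>u i. u \<in> W \<Longrightarrow> i < k' u \<Longrightarrow> \<sigma> u i < k u"
  shows "proper_coloring (rep_V W k') (rep_E (restr E W)) (\<lambda>x. c (fst x, \<sigma> (fst x) (snd x)))"
  unfolding proper_coloring_def
proof (intro ballI impI)
  fix x y assume x: "x \<in> rep_V W k'" and y: "y \<in> rep_V W k'" and xy: "rep_E (restr E W) x y"
  have "(fst x, \<sigma> (fst x) (snd x)) \<in> rep_V V k" "(fst y, \<sigma> (fst y) (snd y)) \<in> rep_V V k"
    using x y bound \<open>W \<subseteq> V\<close> by (auto simp: mem_rep_V)
  moreover have "rep_E E (fst x, \<sigma> (fst x) (snd x)) (fst y, \<sigma> (fst y) (snd y))"
  proof (cases "fst x = fst y")
    case True
    then show ?thesis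
      using xy x y inj[of "fst x"] unfolding rep_E_def by (auto simp: mem_rep_V inj_on_def)
  next
    case False
    then show ?thesis using xy unfolding rep_E_def restr_def by simp
  qed
  ultimately show "c (fst x, \<sigma> (fst x) (snd x)) \<noteq> c (fst y, \<sigma> (fst y) (snd y))"
    using proper unfolding proper_coloring_def by blast
qed

lemma rainbow_transversal_avoiding:
  assumes proper: "proper_coloring (rep_V V k) (rep_E E) c" and "W \<subseteq> V"
    and forces: "forces_rainbow_transversal W (restr E W) k'"
    and room: "\<And>u. u \<in> W \<Longrightarrow> finite (X u) \<and> k' u + card (X u) \<le> k u"
  obtains s where "rainbow_transversal W k c s" "\<And>u. u \<in> W \<Longrightarrow> c (u, s u) \<notin> X u"
proof -
  define Free where "Free u = {i. i < k u \<and> c (u, i) \<notin> X u}" for u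
  have "\<exists>\<sigma>. \<sigma> ` {..<k' u} \<subseteq> Free u \<and> inj_on \<sigma> {..<k' u}" if u: "u \<in> W" for u
  proof (rule card_le_inj)
    show "card {..<k' u} \<le> card (Free u)"
      using card_lessThan_le_avoiding[OF proper_coloring_rep_clique_inj[OF proper] conjunct1[OF room]]
        room u \<open>W \<subseteq> V\<close> unfolding Free_def by fastforce
  qed (simp_all add: Free_def)
  then obtain \<sigma> where \<sigma>: "\<And>u. u \<in> W \<Longrightarrow> \<sigma> u ` {..<k' u} \<subseteq> Free u \<and> inj_on (\<sigma> u) {..<k' u}"
    by metis
  then have \<sigma>_Free: "\<sigma> u i < k u \<and> c (u, \<sigma> u i) \<notin> X u" if "u \<in> W" "i < k' u" for u i
    using that unfolding Free_def by blast
  obtain r where r: "rainbow_transversal W k' (\<lambda>x. c (fst x, \<sigma> (fst x) (snd x))) r"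
    using forces_rainbow_transversalD[OF forces proper_coloring_rep_reindex[OF proper \<open>W \<subseteq> V\<close>]] \<sigma> \<sigma>_Free
    by blast
  show thesis
  proof
    show "rainbow_transversal W k c (\<lambda>u. \<sigma> u (r u))"
      using r \<sigma>_Free unfolding rainbow_transversal_def by simp
    show "c (u, \<sigma> u (r u)) \<notin> X u" if "u \<in> W" for u
      using r \<sigma>_Free that unfolding rainbow_transversal_def by simp
  qed
qed

lemma forces_rainbow_transversal_join:
  assumes disj: "V1 \<inter> V2 = {}" and "finite V2"
    and forces1: "forces_rainbow_transversal V1 (restr E V1) k1"
    and forces2: "forces_rainbow_transversal V2 (restr E V2) k2"
  shows "forces_rainbow_transversal (V1 \<union> V2) E
           (\<lambda>h. if h \<in> V1 then k1 h + card {v \<in> V2. \<not> E h v} else k2 h)"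
    (is "forces_rainbow_transversal _ _ ?k")
  unfolding forces_rainbow_transversal_def
proof (intro conjI allI impI)
  show "\<forall>h\<in>V1 \<union> V2. 1 \<le> ?k h"
    using forces1 forces2 unfolding forces_rainbow_transversal_def by auto
  fix c assume proper: "proper_coloring (rep_V (V1 \<union> V2) ?k) (rep_E E) c"
  have "proper_coloring (rep_V V2 k2) (rep_E (restr E V2)) (\<lambda>x. c (fst x, snd x))"
    by (rule proper_coloring_rep_reindex[OF proper]) (use disj in auto)
  then obtain t where t: "rainbow_transversal V2 k2 c t"
    using forces_rainbow_transversalD[OF forces2] by auto
  define X where "X u = (\<lambda>v. c (v, t v)) ` {v \<in> V2. \<not> E u v}" for u
  have "finite (X u) \<and> k1 u + card (X u) \<le> ?k u" if "u \<in> V1" for u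
    using that \<open>finite V2\<close> card_image_le[of "{v \<in> V2. \<not> E u v}" "\<lambda>v. c (v, t v)"]
    unfolding X_def by simp
  then obtain r where r: "rainbow_transversal V1 ?k c r" and avoid: "\<And>u. u \<in> V1 \<Longrightarrow> c (u, r u) \<notin> X u"
    using rainbow_transversal_avoiding[OF proper _ forces1, of X] by blast
  define s where "s h = (if h \<in> V1 then r h else t h)" for h
  have "c (u, r u) \<noteq> c (v, t v)" if u: "u \<in> V1" and v: "v \<in> V2" for u v
  proof (cases "E u v")
    case True
    have "u \<noteq> v" using u v disj by blast
    moreover have "(u, r u) \<in> rep_V (V1 \<union> V2) ?k" "(v, t v) \<in> rep_V (V1 \<union> V2) ?k"
      using r t u v disj unfolding rainbow_transversal_def by (auto simp: mem_rep_V)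
    ultimately show ?thesis using proper True unfolding proper_coloring_def rep_E_def by force
  next
    case False
    then show ?thesis using avoid[OF u] v unfolding X_def by blast
  qed
  then have "inj_on (\<lambda>h. c (h, s h)) (V1 \<union> V2)"
    using r t disj unfolding rainbow_transversal_def s_def inj_on_Un
    by (auto simp: inj_on_def)
  moreover have "\<forall>h\<in>V1 \<union> V2. s h < ?k h"
    using r t disj unfolding rainbow_transversal_def s_def by auto
  ultimately show "\<exists>s. rainbow_transversal (V1 \<union> V2) ?k c s"
    unfolding rainbow_transversal_def by blast
qed

lemma rho_R_disjoint_union_upper:
  assumes "finite V" "V1 \<inter> V2 = {}" "V1 \<union> V2 = V"
  shows "rho_R V E \<le> rho_R V1 (restr E V1) + rho_R V2 (restr E V2)
                        + card {(u, v). u \<in> V1 \<and> v \<in> V2 \<and> \<not> E u v}"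
proof -
  have finite: "finite V1" "finite V2" using assms by auto
  obtain k1 where forces1: "forces_rainbow_transversal V1 (restr E V1) k1"
    and sum1: "sum k1 V1 = rho_R V1 (restr E V1)"
    using rho_R_attained[OF finite(1)] .
  obtain k2 where forces2: "forces_rainbow_transversal V2 (restr E V2) k2"
    and sum2: "sum k2 V2 = rho_R V2 (restr E V2)"
    using rho_R_attained[OF finite(2)] .
  define k where "k h = (if h \<in> V1 then k1 h + card {v \<in> V2. \<not> E h v} else k2 h)" for h
  have "{(u, v). u \<in> V1 \<and> v \<in> V2 \<and> \<not> E u v} = (SIGMA u:V1. {v \<in> V2. \<not> E u v})" by auto
  then have non_edges: "card {(u, v). u \<in> V1 \<and> v \<in> V2 \<and> \<not> E u v} = (\<Sum>u\<in>V1. card {v \<in> V2. \<not> E u v})"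
    using finite by simp
  have "sum k V = sum k V1 + sum k V2" using assms sum.union_disjoint[of V1 V2 k] by auto
  also have "\<dots> = sum k1 V1 + (\<Sum>u\<in>V1. card {v \<in> V2. \<not> E u v}) + sum k2 V2"
    using assms(2) unfolding k_def by (auto simp: sum.distrib intro!: sum.cong)
  finally have "sum k V = rho_R V1 (restr E V1) + rho_R V2 (restr E V2)
                            + card {(u, v). u \<in> V1 \<and> v \<in> V2 \<and> \<not> E u v}"
    using sum1 sum2 non_edges by simp
  moreover have "forces_rainbow_transversal V E k"
    using forces_rainbow_transversal_join[OF assms(2) finite(2) forces1 forces2] assms(3)
    unfolding k_def by simp
  ultimately show ?thesis using rho_R_le_sum by metis
qed

theorem theorem4p1:
  fixes V :: "'a set" and E :: "'a \<Rightarrow> 'a \<Rightarrow> bool"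
  assumes "simple_graph V E"
  shows "rho V E \<le> rho_R V E
    \<and> (\<forall>E'. simple_graph V E' \<longrightarrow> (\<forall>u v. E' u v \<longrightarrow> E u v) \<longrightarrow> rho_R V E \<le> rho_R V E')
    \<and> (\<forall>V1 V2. V1 \<inter> V2 = {} \<longrightarrow> V1 \<union> V2 = V \<longrightarrow>
           rho_R V1 (restr E V1) + rho_R V2 (restr E V2) \<le> rho_R V E \<and>
           rho_R V E \<le> rho_R V1 (restr E V1) + rho_R V2 (restr E V2)
                        + card {(u, v). u \<in> V1 \<and> v \<in> V2 \<and> \<not> E u v})"
proof -
  have finite: "finite V" using assms unfolding simple_graph_def by blast
  show ?thesis
  proof (intro conjI allI impI)
    show "rho V E \<le> rho_R V E" by (rule rho_le_rho_R[OF assms])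
    show "rho_R V E \<le> rho_R V E'" if "\<forall>u v. E' u v \<longrightarrow> E u v" for E'
      using rho_R_antimono[OF finite] that by blast
  qed (simp_all add: rho_R_disjoint_union_lower[OF finite] rho_R_disjoint_union_upper[OF finite])
qed

end
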